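(* For every $\varepsilon>0$, the following algorithm is $(\varepsilon,0)$-differentially private. Given a graph $G=([n],E)$: set $d=10000/\varepsilon^2$; for each $v\in[n]$ let $\hat d(v)=d(v)+\mathrm{Lap}(3/\varepsilon)$ (independent noise) and let $\mathcal C=\{v:\hat d(v)>d\}$; let $G_1=(\mathcal C,E_1)$ with $E_1=\{\{u,v\}\in E: u,v\in\mathcal C\}$; sample a cut $S_1^A\in\{\pm1\}^{\mathcal C}$ of $G_1$ with $\Pr[S_1^A=\hat S]\propto\exp(\varepsilon\,\mathrm{val}_{G_1}(\hat S)/6)$; let $S_1^B$ be a uniformly random assignment in $\{\pm1\}^{[n]\setminus\mathcal C}$ and $S_1$ the concatenation of $S_1^A$ and $S_1^B$; let $S_2$ be the output of the algorithm $\mathcal A_{\varepsilon/3}$ on $G$; output $S_1$ with probability $1/2$ and $S_2$ with probability $1/2$. Here $\mathcal A_{\varepsilon'}$ is: set $\varepsilon_0=\varepsilon'/2$, choose independent uniform $c_1(v),c_2(v)\in\{\pm1\}$ for all $v$, let $\ell(v)=|\{u:\{u,v\}\in E,c_1(u)=c_1(v)\}|$, sample independent $\zeta_v\sim\mathrm{DLap}(1/\varepsilon_0)$, set $c(v)=c_1(v)$ if $\ell(v)-\lceil\frac{d(v)-1}2\rceil+\zeta_v\le0$ and $c(v)=c_2(v)$ otherwise, and output $c$ (equivalently $\{v:c(v)=+1\}$).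
   Context: $G$ is a simple undirected graph; $d(v)$ is its degree. A cut is an assignment in $\{\pm1\}^V$ (equivalently a vertex subset), and $\mathrm{val}_H(\hat S)$ is the number of edges of $H$ whose endpoints receive different values. $\mathrm{Lap}(b)$ has density $\frac1{2b}e^{-|x|/b}$; $\mathrm{DLap}(1/\varepsilon_0)$ has mass $\frac{e^{\varepsilon_0}-1}{e^{\varepsilon_0}+1}e^{-\varepsilon_0|x|}$ at $x\in\mathbb Z$. Neighboring graphs on $[n]$ differ by one edge; $(\varepsilon,0)$-DP means $\Pr[\mathcal M(G)\in T]\le e^\varepsilon\Pr[\mathcal M(G')\in T]$ for neighbors and all output sets $T$. *)

theory Defs
  imports "HOL-Probability.Probability"
begin

definition graph_on :: "nat \<Rightarrow> nat set set \<Rightarrow> bool" where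
  "graph_on n E \<longleftrightarrow> (\<forall>e\<in>E. \<exists>u v. e = {u, v} \<and> u \<noteq> v \<and> u < n \<and> v < n)"

definition neighbor_graphs :: "nat set set \<Rightarrow> nat set set \<Rightarrow> bool" where
  "neighbor_graphs E E' \<longleftrightarrow> card ((E - E') \<union> (E' - E)) = 1"

definition deg :: "nat set set \<Rightarrow> nat \<Rightarrow> nat" where
  "deg E v = card {u. {u, v} \<in> E}"

definition cut_val :: "nat set set \<Rightarrow> nat set \<Rightarrow> nat" where
  "cut_val H A = card {e\<in>H. card (e \<inter> A) = 1}"

definition lap_density :: "real \<Rightarrow> real \<Rightarrow> real" where
  "lap_density b x = exp (- \<bar>x\<bar> / b) / (2 * b)"

definition laplace :: "real \<Rightarrow> real measure" where
  "laplace b = density lborel (\<lambda>x. ennreal (lap_density b x))"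

definition dlap :: "real \<Rightarrow> int pmf" where
  "dlap eps0 = embed_pmf (\<lambda>z. (exp eps0 - 1) / (exp eps0 + 1) * exp (- eps0 * real_of_int \<bar>z\<bar>))"

definition exp_mech_cut :: "real \<Rightarrow> nat set \<Rightarrow> nat set set \<Rightarrow> nat set pmf" where
  "exp_mech_cut eps C H = embed_pmf (\<lambda>A. if A \<subseteq> C
      then exp (eps * real (cut_val H A) / 6) / (\<Sum>B\<in>Pow C. exp (eps * real (cut_val H B) / 6))
      else 0)"

text \<open>Algorithm A_{eps'}: output is the set of vertices v with c(v) = +1.
  A sign vector in {\<plusminus>1}^[n] is represented by its set of +1 vertices.\<close>
definition alg_A :: "real \<Rightarrow> nat \<Rightarrow> nat set set \<Rightarrow> nat set pmf" where
  "alg_A eps' n E =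
    (let eps0 = eps' / 2 in
     bind_pmf (pmf_of_set (Pow {0..<n})) (\<lambda>P1.
     bind_pmf (pmf_of_set (Pow {0..<n})) (\<lambda>P2.
     bind_pmf (Pi_pmf {0..<n} 0 (\<lambda>_. dlap eps0)) (\<lambda>\<zeta>.
       return_pmf {v\<in>{0..<n}.
         if int (card {u. {u, v} \<in> E \<and> (u \<in> P1 \<longleftrightarrow> v \<in> P1)})
              - \<lceil>(real (deg E v) - 1) / 2\<rceil> + \<zeta> v \<le> 0
         then v \<in> P1 else v \<in> P2}))))"

definition S1_dist :: "real \<Rightarrow> nat \<Rightarrow> nat set set \<Rightarrow> nat set \<Rightarrow> nat set pmf" where
  "S1_dist eps n E C =
     bind_pmf (exp_mech_cut eps C {e\<in>E. e \<subseteq> C}) (\<lambda>A.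
     bind_pmf (pmf_of_set (Pow ({0..<n} - C))) (\<lambda>B. return_pmf (A \<union> B)))"

definition mech :: "real \<Rightarrow> nat \<Rightarrow> nat set set \<Rightarrow> nat set measure" where
  "mech eps n E =
    (let d = 10000 / eps\<^sup>2 in
     bind (PiM {0..<n} (\<lambda>_. laplace (3 / eps))) (\<lambda>x.
       let C = {v\<in>{0..<n}. real (deg E v) + x v > d} in
       measure_pmf (bind_pmf (bernoulli_pmf (1/2)) (\<lambda>b.
          if b then S1_dist eps n E C else alg_A (eps / 3) n E))))"

end

theory Submission
  imports Defs
begin

text \<open>
  Let \<open>G, G'\<close> differ in the edge \<open>{u, w}\<close>. Only the degrees of \<open>u\<close> and \<open>w\<close> change, each by at
  most one, so shifting the two Laplace noise coordinates \<open>x u, x w\<close> by the degree differences turns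
  the noisy high-degree set \<open>\<C>\<close> of \<open>G\<close> into that of \<open>G'\<close>; as \<open>Lap(3/\<epsilon>)\<close> changes its density by
  at most \<open>exp (\<epsilon>/3)\<close> under a unit shift, this costs a factor \<open>exp (2\<epsilon>/3)\<close>.
  For a fixed \<open>\<C>\<close> both branches of the output cost \<open>exp (\<epsilon>/3)\<close>: the score of the exponential
  mechanism, the cut value of the induced graph on \<open>\<C>\<close>, has sensitivity one; and in \<open>\<A>\<^bsub>\<epsilon>/3\<^esub>\<close>
  the statistic \<open>l(v) - \<lceil>(d(v) - 1) / 2\<rceil>\<close> changes by at most one, and only at \<open>u\<close> and \<open>w\<close>,
  so that shifting the discrete Laplace noise \<open>\<zeta>\<close> costs \<open>exp (2 \<epsilon>\<^sub>0) = exp (\<epsilon>/3)\<close>.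
\<close>

section \<open>Comparing distributions\<close>

lemma nn_integral_pmf_le:
  assumes "\<And>x. pmf p x \<le> k * pmf q x" and "0 \<le> k"
  shows "(\<integral>\<^sup>+x. f x \<partial>p) \<le> ennreal k * (\<integral>\<^sup>+x. f x \<partial>q)"
proof -
  have "(\<integral>\<^sup>+x. f x \<partial>p) = (\<integral>\<^sup>+x. ennreal (pmf p x) * f x \<partial>count_space UNIV)"
    by (rule nn_integral_measure_pmf)
  also have "\<dots> \<le> (\<integral>\<^sup>+x. ennreal k * (ennreal (pmf q x) * f x) \<partial>count_space UNIV)"
  proof (rule nn_integral_mono)
    fix x
    have "ennreal (pmf p x) \<le> ennreal k * ennreal (pmf q x)"
      using assms by (simp add: ennreal_mult[symmetric] ennreal_leI)
    then show "ennreal (pmf p x) * f x \<le> ennreal k * (ennreal (pmf q x) * f x)"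
      by (simp add: mult.assoc[symmetric] mult_right_mono)
  qed
  also have "\<dots> = ennreal k * (\<integral>\<^sup>+x. f x \<partial>q)"
    by (simp add: nn_integral_cmult nn_integral_measure_pmf)
  finally show ?thesis .
qed

corollary emeasure_pmf_le:
  "(\<And>x. pmf p x \<le> k * pmf q x) \<Longrightarrow> 0 \<le> k \<Longrightarrow> emeasure p A \<le> ennreal k * emeasure q A"
  using nn_integral_pmf_le[of p k q "indicator A"] by simp

lemma emeasure_bind_pmf_mono:
  fixes f g :: "'a \<Rightarrow> 'b pmf"
  assumes "\<And>x. emeasure (f x) A \<le> ennreal k * emeasure (g x) A"
  shows "emeasure (bind_pmf p f) A \<le> ennreal k * emeasure (bind_pmf p g) A"
  using nn_integral_mono[of p, OF assms] by (simp add: nn_integral_cmult)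

section \<open>Discrete Laplace noise\<close>

lemma nn_integral_count_space_int:
  "(\<integral>\<^sup>+z. f z \<partial>count_space (UNIV :: int set))
     = (\<integral>\<^sup>+n. f (int n) \<partial>count_space UNIV) + (\<integral>\<^sup>+n. f (- int n - 1) \<partial>count_space UNIV)"
proof -
  have nonneg: "bij_betw int UNIV {0::int..}"
    by (auto simp: bij_betw_def inj_on_def image_def intro!: exI[of _ "nat _"])
  have neg: "bij_betw (\<lambda>n::nat. - int n - 1) UNIV {..<0::int}"
    by (auto simp: bij_betw_def inj_on_def image_def intro!: exI[of _ "nat (- _ - 1)"])
  have "(\<integral>\<^sup>+z. f z \<partial>count_space UNIV)
      = (\<integral>\<^sup>+z. f z * indicator {0..} z + f z * indicator {..<0} z \<partial>count_space UNIV)"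
    by (intro nn_integral_cong) (auto split: split_indicator)
  also have "\<dots> = (\<integral>\<^sup>+z. f z \<partial>count_space {0..}) + (\<integral>\<^sup>+z. f z \<partial>count_space {..<0})"
    by (subst nn_integral_add) (auto simp: nn_integral_count_space_indicator)
  finally show ?thesis
    by (simp add: nn_integral_bij_count_space[OF nonneg] nn_integral_bij_count_space[OF neg])
qed

lemma pmf_dlap:
  assumes "a > 0"
  shows "pmf (dlap a) z = (exp a - 1) / (exp a + 1) * exp (- a * real_of_int \<bar>z\<bar>)"
proof -
  define c where "c = (exp a - 1) / (exp a + 1)"
  define q where "q = exp (- a)"
  have c: "0 \<le> c" and q: "0 \<le> q" "q < 1"
    using assms by (auto simp: c_def q_def)
  have nonneg: "exp (- a * real_of_int \<bar>int n\<bar>) = q ^ n" for n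
    by (simp add: q_def exp_of_nat_mult[symmetric] mult.commute)
  have neg: "exp (- a * real_of_int \<bar>- int n - 1\<bar>) = q * q ^ n" for n
    by (simp add: q_def exp_of_nat_mult[symmetric] algebra_simps flip: exp_add)
  have geometric: "(\<integral>\<^sup>+n. ennreal (r * q ^ n) \<partial>count_space UNIV) = ennreal (r / (1 - q))"
    if "0 \<le> r" for r
    using q that by (simp add: nn_integral_count_space_nat suminf_ennreal2 summable_geometric
        summable_mult suminf_mult suminf_geometric)
  have "(e - 1) / (e + 1) * (1 + 1 / e) = 1 - 1 / e" if "e > 0" for e :: real
    using that add_pos_pos[OF that zero_less_one] by (simp add: divide_simps)
  then have "c * (1 + q) = 1 - q"
    by (simp add: c_def q_def exp_minus inverse_eq_divide)
  then have total: "c / (1 - q) + c * q / (1 - q) = 1"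
    using q by (simp add: add_divide_distrib[symmetric] algebra_simps)
  show ?thesis
    unfolding dlap_def c_def[symmetric]
  proof (rule pmf_embed_pmf)
    have "(\<integral>\<^sup>+z. ennreal (c * exp (- a * real_of_int \<bar>z\<bar>)) \<partial>count_space UNIV)
        = (\<integral>\<^sup>+n. ennreal (c * q ^ n) \<partial>count_space UNIV)
          + (\<integral>\<^sup>+n. ennreal ((c * q) * q ^ n) \<partial>count_space UNIV)"
      unfolding nn_integral_count_space_int nonneg neg by (simp only: mult.assoc)
    also have "\<dots> = 1"
      using c q total by (simp add: geometric ennreal_plus[symmetric] del: ennreal_plus)
    finally show "(\<integral>\<^sup>+z. ennreal (c * exp (- a * real_of_int \<bar>z\<bar>)) \<partial>count_space UNIV) = 1" .
  qed (use c in simp)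
qed

lemma pmf_dlap_shift_le:
  assumes "a > 0"
  shows "pmf (dlap a) (z + d) \<le> exp (a * \<bar>real_of_int d\<bar>) * pmf (dlap a) z"
proof -
  have "- a * \<bar>real_of_int (z + d)\<bar> \<le> a * \<bar>real_of_int d\<bar> + - a * \<bar>real_of_int z\<bar>"
    using assms mult_left_mono[of "\<bar>real_of_int z\<bar>" "\<bar>real_of_int (z + d)\<bar> + \<bar>real_of_int d\<bar>" a]
    by (simp add: algebra_simps)
  then have "exp (- a * \<bar>real_of_int (z + d)\<bar>) \<le> exp (a * \<bar>real_of_int d\<bar>) * exp (- a * \<bar>real_of_int z\<bar>)"
    by (simp flip: exp_add)
  moreover have "0 \<le> (exp a - 1) / (exp a + 1)"
    using assms by simp
  ultimately show ?thesis
    unfolding pmf_dlap[OF assms] of_int_abs by (metis mult.left_commute mult_left_mono)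
qed

lemma pmf_Pi_dlap_shift_le:
  assumes "a > 0" and "finite I" and "\<And>v. v \<notin> I \<Longrightarrow> \<delta> v = 0"
  shows "pmf (Pi_pmf I 0 (\<lambda>_. dlap a)) (\<lambda>v. \<eta> v + \<delta> v)
     \<le> exp (a * (\<Sum>v\<in>I. \<bar>real_of_int (\<delta> v)\<bar>)) * pmf (Pi_pmf I 0 (\<lambda>_. dlap a)) \<eta>"
proof (cases "\<forall>v. v \<notin> I \<longrightarrow> \<eta> v = 0")
  case True
  have "(\<Prod>v\<in>I. pmf (dlap a) (\<eta> v + \<delta> v))
      \<le> (\<Prod>v\<in>I. exp (a * \<bar>real_of_int (\<delta> v)\<bar>) * pmf (dlap a) (\<eta> v))"
    by (intro prod_mono conjI pmf_dlap_shift_le assms pmf_nonneg)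
  also have "\<dots> = exp (a * (\<Sum>v\<in>I. \<bar>real_of_int (\<delta> v)\<bar>)) * (\<Prod>v\<in>I. pmf (dlap a) (\<eta> v))"
    using assms by (simp add: prod.distrib exp_sum sum_distrib_left)
  finally show ?thesis
    using True assms by (simp add: pmf_Pi)
next
  case False
  then show ?thesis
    using assms by (subst pmf_Pi) auto
qed

lemma emeasure_dlap_noise_le:
  assumes "a > 0" and "finite I" and "\<And>v. v \<notin> I \<Longrightarrow> s v = s' v"
  shows "emeasure (map_pmf (\<lambda>\<zeta>. f (\<lambda>v. s v + \<zeta> v)) (Pi_pmf I 0 (\<lambda>_. dlap a))) A
     \<le> ennreal (exp (a * (\<Sum>v\<in>I. \<bar>real_of_int (s v - s' v)\<bar>)))
        * emeasure (map_pmf (\<lambda>\<zeta>. f (\<lambda>v. s' v + \<zeta> v)) (Pi_pmf I 0 (\<lambda>_. dlap a))) A"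
proof -
  define P where "P = Pi_pmf I 0 (\<lambda>_. dlap a)"
  define \<delta> where "\<delta> v = s v - s' v" for v
  define shift where "shift \<zeta> = (\<lambda>v. \<zeta> v + \<delta> v)" for \<zeta> :: "'a \<Rightarrow> int"
  have "inj shift"
    by (rule injI) (simp add: shift_def fun_eq_iff)
  have "pmf (map_pmf shift P) \<eta> \<le> exp (a * (\<Sum>v\<in>I. \<bar>real_of_int (\<delta> v)\<bar>)) * pmf P \<eta>" for \<eta>
  proof -
    have "pmf (map_pmf shift P) \<eta> = pmf P (\<lambda>v. \<eta> v + - \<delta> v)"
      using pmf_map_inj'[OF \<open>inj shift\<close>, of P "\<lambda>v. \<eta> v - \<delta> v"] by (simp add: shift_def)
    also have "\<dots> \<le> exp (a * (\<Sum>v\<in>I. \<bar>real_of_int (\<delta> v)\<bar>)) * pmf P \<eta>"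
      using pmf_Pi_dlap_shift_le[OF assms(1,2), of "\<lambda>v. - \<delta> v" \<eta>] assms(3)
      by (simp add: P_def \<delta>_def abs_minus_commute)
    finally show ?thesis .
  qed
  then have "emeasure (map_pmf shift P) B \<le> ennreal (exp (a * (\<Sum>v\<in>I. \<bar>real_of_int (\<delta> v)\<bar>))) * emeasure P B" for B
    by (rule emeasure_pmf_le) simp
  moreover have "map_pmf (\<lambda>\<zeta>. f (\<lambda>v. s v + \<zeta> v)) P = map_pmf (\<lambda>\<zeta>. f (\<lambda>v. s' v + \<zeta> v)) (map_pmf shift P)"
    by (simp add: map_pmf_comp shift_def \<delta>_def comp_def algebra_simps)
  ultimately show ?thesis
    by (simp add: P_def \<delta>_def)
qed

section \<open>Laplace noise\<close>

lemma lap_density_measurable [measurable]: "lap_density b \<in> borel_measurable borel"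
  unfolding lap_density_def by measurable

lemma sets_laplace [simp, measurable_cong]: "sets (laplace b) = sets borel"
  by (simp add: laplace_def)

lemma space_laplace [simp]: "space (laplace b) = UNIV"
  by (simp add: laplace_def)

lemma sigma_finite_laplace: "sigma_finite_measure (laplace b)"
  unfolding laplace_def
  by (subst sigma_finite_measure.sigma_finite_iff_density_finite[OF sigma_finite_lborel]) simp_all

lemma lap_density_shift_le:
  assumes "b > 0"
  shows "lap_density b (y - c) \<le> exp (\<bar>c\<bar> / b) * lap_density b y"
proof -
  have "- \<bar>y - c\<bar> / b \<le> \<bar>c\<bar> / b + - \<bar>y\<bar> / b"
    using divide_right_mono[of "- \<bar>y - c\<bar>" "\<bar>c\<bar> - \<bar>y\<bar>" b] assms
    by (simp add: diff_divide_distrib)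
  then have "exp (- \<bar>y - c\<bar> / b) \<le> exp (\<bar>c\<bar> / b) * exp (- \<bar>y\<bar> / b)"
    by (simp flip: exp_add)
  then show ?thesis
    unfolding lap_density_def using assms by (simp add: divide_right_mono)
qed

lemma nn_integral_laplace_shift_le:
  assumes "b > 0" and [measurable]: "G \<in> borel_measurable borel"
  shows "(\<integral>\<^sup>+y. G (y + c) \<partial>laplace b) \<le> ennreal (exp (\<bar>c\<bar> / b)) * (\<integral>\<^sup>+y. G y \<partial>laplace b)"
proof -
  have "(\<integral>\<^sup>+y. G (y + c) \<partial>laplace b) = (\<integral>\<^sup>+y. ennreal (lap_density b y) * G (y + c) \<partial>lborel)"
    unfolding laplace_def by (subst nn_integral_density) auto
  also have "\<dots> = (\<integral>\<^sup>+y. ennreal (lap_density b (y - c)) * G y \<partial>lborel)"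
    using nn_integral_real_affine[of "\<lambda>y. ennreal (lap_density b (y - c)) * G y" 1 c]
    by (simp add: add.commute)
  also have "\<dots> \<le> (\<integral>\<^sup>+y. ennreal (exp (\<bar>c\<bar> / b)) * (ennreal (lap_density b y) * G y) \<partial>lborel)"
  proof (rule nn_integral_mono)
    fix y
    have "ennreal (lap_density b (y - c)) \<le> ennreal (exp (\<bar>c\<bar> / b)) * ennreal (lap_density b y)"
      using lap_density_shift_le[OF assms(1), of y c] assms(1)
      by (simp add: lap_density_def ennreal_mult[symmetric] ennreal_leI)
    then show "ennreal (lap_density b (y - c)) * G y \<le> ennreal (exp (\<bar>c\<bar> / b)) * (ennreal (lap_density b y) * G y)"
      by (simp add: mult.assoc[symmetric] mult_right_mono)
  qed
  also have "\<dots> = ennreal (exp (\<bar>c\<bar> / b)) * (\<integral>\<^sup>+y. G y \<partial>laplace b)"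
    unfolding laplace_def by (simp add: nn_integral_density nn_integral_cmult)
  finally show ?thesis .
qed

lemma nn_integral_PiM_laplace_update_le:
  assumes "b > 0" and "finite I" and "i \<in> I"
    and F: "F \<in> borel_measurable (PiM I (\<lambda>_. laplace b))"
  shows "(\<integral>\<^sup>+x. F (x(i := x i + c)) \<partial>PiM I (\<lambda>_. laplace b))
     \<le> ennreal (exp (\<bar>c\<bar> / b)) * (\<integral>\<^sup>+x. F x \<partial>PiM I (\<lambda>_. laplace b))"
proof -
  interpret product_sigma_finite "\<lambda>_. laplace b"
    by (simp add: product_sigma_finite_def sigma_finite_laplace)
  define J where "J = I - {i}"
  have I: "I = insert i J" "i \<notin> J" "finite J"
    using assms by (auto simp: J_def)
  note F' = F[unfolded I(1)]
  have update: "(\<lambda>x. x(i := x i + c)) \<in> PiM (insert i J) (\<lambda>_. laplace b) \<rightarrow>\<^sub>M PiM (insert i J) (\<lambda>_. laplace b)"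
    by (rule measurable_PiM_single') (auto simp: space_PiM PiE_iff)
  have slice_measurable: "(\<lambda>y. F (x(i := y))) \<in> borel_measurable borel"
    if "x \<in> space (PiM J (\<lambda>_. laplace b))" for x
    using measurable_comp[OF measurable_component_update[OF that I(2)] F']
    by (simp add: comp_def cong: measurable_cong_sets)
  have inner_measurable: "(\<lambda>x. \<integral>\<^sup>+y. F (x(i := y)) \<partial>laplace b) \<in> borel_measurable (PiM J (\<lambda>_. laplace b))"
    using F' by (intro sigma_finite_measure.borel_measurable_nn_integral[OF sigma_finite_laplace])
      (simp add: measurable_compose[OF measurable_Pair])
  have "(\<integral>\<^sup>+x. F (x(i := x i + c)) \<partial>PiM I (\<lambda>_. laplace b))
      = (\<integral>\<^sup>+x. \<integral>\<^sup>+y. F (x(i := y + c)) \<partial>laplace b \<partial>PiM J (\<lambda>_. laplace b))"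
    unfolding I(1) using measurable_comp[OF update F']
    by (subst product_nn_integral_insert[OF I(3,2)]) (simp_all add: comp_def)
  also have "\<dots> \<le> (\<integral>\<^sup>+x. ennreal (exp (\<bar>c\<bar> / b)) * \<integral>\<^sup>+y. F (x(i := y)) \<partial>laplace b \<partial>PiM J (\<lambda>_. laplace b))"
    using nn_integral_laplace_shift_le[OF assms(1) slice_measurable]
    by (intro nn_integral_mono) simp
  also have "\<dots> = ennreal (exp (\<bar>c\<bar> / b)) * (\<integral>\<^sup>+x. F x \<partial>PiM I (\<lambda>_. laplace b))"
    unfolding I(1) by (simp add: nn_integral_cmult product_nn_integral_insert[OF I(3,2) F'] inner_measurable)
  finally show ?thesis .
qed

lemma nn_integral_PiM_laplace_shift_le:
  assumes "b > 0" and "finite I" and "S \<subseteq> I" and "\<And>i. i \<notin> S \<Longrightarrow> c i = 0"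
    and "F \<in> borel_measurable (PiM I (\<lambda>_. laplace b))"
  shows "(\<integral>\<^sup>+x. F (\<lambda>i. x i + c i) \<partial>PiM I (\<lambda>_. laplace b))
     \<le> ennreal (exp ((\<Sum>i\<in>S. \<bar>c i\<bar>) / b)) * (\<integral>\<^sup>+x. F x \<partial>PiM I (\<lambda>_. laplace b))"
  using finite_subset[OF assms(3,2)] assms(3,4)
proof (induction S arbitrary: c rule: finite_induct)
  case empty
  then show ?case
    by simp
next
  case (insert j S)
  let ?M = "PiM I (\<lambda>_. laplace b)"
  define c' where "c' = c(j := 0)"
  have "c' i = 0" if "i \<notin> I" for i
    using insert.prems that by (auto simp: c'_def)
  then have "(\<lambda>x i. x i + c' i) \<in> ?M \<rightarrow>\<^sub>M ?M"
    by (intro measurable_PiM_single') (auto simp: space_PiM PiE_iff extensional_def)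
  then have shifted_measurable: "(\<lambda>x. F (\<lambda>i. x i + c' i)) \<in> borel_measurable ?M"
    using measurable_comp[OF _ assms(5)] by (simp add: comp_def)
  have "(\<lambda>i. x i + c i) = (\<lambda>i. (x(j := x j + c j)) i + c' i)" for x
    by (simp add: c'_def fun_eq_iff)
  then have "(\<integral>\<^sup>+x. F (\<lambda>i. x i + c i) \<partial>?M)
      \<le> ennreal (exp (\<bar>c j\<bar> / b)) * (\<integral>\<^sup>+x. F (\<lambda>i. x i + c' i) \<partial>?M)"
    using nn_integral_PiM_laplace_update_le[OF assms(1,2) _ shifted_measurable] insert.prems
    by simp
  also have "\<dots> \<le> ennreal (exp (\<bar>c j\<bar> / b)) * (ennreal (exp ((\<Sum>i\<in>S. \<bar>c' i\<bar>) / b)) * (\<integral>\<^sup>+x. F x \<partial>?M))"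
    using insert.prems by (intro mult_left_mono insert.IH) (auto simp: c'_def)
  also have "(\<Sum>i\<in>S. \<bar>c' i\<bar>) = (\<Sum>i\<in>S. \<bar>c i\<bar>)"
    using insert.hyps by (intro sum.cong) (auto simp: c'_def)
  finally show ?case
    using insert.hyps assms(1) by (simp add: mult.assoc[symmetric] ennreal_mult[symmetric] add_divide_distrib exp_add)
qed

section \<open>Graphs differing in one edge\<close>

lemma graph_on_finite:
  assumes "graph_on n E"
  shows "finite E"
proof -
  have "E \<subseteq> (\<lambda>(a, c). {a, c}) ` ({0..<n} \<times> {0..<n})"
    using assms unfolding graph_on_def by force
  then show ?thesis
    by (rule finite_subset) simp
qed

definition edge_added :: "nat \<Rightarrow> nat \<Rightarrow> nat set set \<Rightarrow> nat set set \<Rightarrow> bool" where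
  "edge_added u w E E' \<longleftrightarrow> u \<noteq> w \<and> finite E \<and> {u, w} \<notin> E \<and> E' = insert {u, w} E"

definition edge_neighbors :: "nat \<Rightarrow> nat \<Rightarrow> nat set set \<Rightarrow> nat set set \<Rightarrow> bool" where
  "edge_neighbors u w E E' \<longleftrightarrow> edge_added u w E E' \<or> edge_added u w E' E"

lemma sym_diff_eq_singletonD:
  assumes "(A - B) \<union> (B - A) = {e}" and "e \<in> B"
  shows "e \<notin> A" and "B = insert e A"
proof -
  have sym_diff: "x \<in> A \<and> x \<notin> B \<or> x \<in> B \<and> x \<notin> A \<longleftrightarrow> x = e" for x
    using assms(1) by (metis Diff_iff Un_iff singleton_iff)
  show "e \<notin> A"
    using sym_diff[of e] assms(2) by simp
  show "B = insert e A"
  proof (rule set_eqI)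
    show "x \<in> B \<longleftrightarrow> x \<in> insert e A" for x
      using sym_diff[of x] assms(2) \<open>e \<notin> A\<close> by auto
  qed
qed

lemma neighbor_graphs_edge_neighbors:
  assumes "graph_on n E" and "graph_on n E'" and "neighbor_graphs E E'"
  obtains u w where "u < n" and "w < n" and "edge_neighbors u w E E'"
proof -
  obtain e where e: "(E - E') \<union> (E' - E) = {e}"
    using assms(3) unfolding neighbor_graphs_def by (rule card_1_singletonE)
  then have e': "(E' - E) \<union> (E - E') = {e}"
    by (simp add: Un_commute)
  have finite: "finite E" "finite E'"
    using assms(1,2) by (simp_all add: graph_on_finite)
  show ?thesis
  proof (cases "e \<in> E'")
    case True
    obtain u w where "e = {u, w}" "u \<noteq> w" "u < n" "w < n"
      using assms(2) True unfolding graph_on_def by blast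
    then show ?thesis
      using that[of u w] finite sym_diff_eq_singletonD[OF e True]
      by (simp add: edge_neighbors_def edge_added_def)
  next
    case False
    then have "e \<in> E"
      using e by blast
    obtain u w where "e = {u, w}" "u \<noteq> w" "u < n" "w < n"
      using assms(1) \<open>e \<in> E\<close> unfolding graph_on_def by blast
    then show ?thesis
      using that[of u w] finite sym_diff_eq_singletonD[OF e' \<open>e \<in> E\<close>]
      by (simp add: edge_neighbors_def edge_added_def)
  qed
qed

lemma edge_neighbors_abs_diff_le:
  fixes f :: "nat set set \<Rightarrow> 'a :: linordered_idom"
  assumes "edge_neighbors u w E E'"
    and "\<And>E. u \<noteq> w \<Longrightarrow> finite E \<Longrightarrow> {u, w} \<notin> E \<Longrightarrow> \<bar>f (insert {u, w} E) - f E\<bar> \<le> k"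
  shows "\<bar>f E' - f E\<bar> \<le> k"
  using assms unfolding edge_neighbors_def edge_added_def by (auto simp: abs_minus_commute)

lemma card_neighbors_insert_edge:
  assumes "finite E" and "{u, w} \<notin> E" and "u \<noteq> w"
  shows "card {x. {x, v} \<in> insert {u, w} E \<and> Q x}
       = card {x. {x, v} \<in> E \<and> Q x} + (if v = u \<and> Q w \<or> v = w \<and> Q u then 1 else 0)"
proof -
  let ?N = "{x. {x, v} \<in> E \<and> Q x}" and ?new = "{x. {x, v} = {u, w} \<and> Q x}"
  have "finite {x. {x, v} \<in> E}"
    using finite_vimageI[OF assms(1), of "\<lambda>x. {x, v}"] by (simp add: inj_def doubleton_eq_iff vimage_def)
  then have "finite ?N"
    by (rule rev_finite_subset) auto
  moreover have "finite ?new"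
    by (rule finite_subset[of _ "{u, w}"]) (auto simp: doubleton_eq_iff)
  moreover have "?N \<inter> ?new = {}"
    using assms(2) by auto
  moreover have "{x. {x, v} \<in> insert {u, w} E \<and> Q x} = ?N \<union> ?new"
    by auto
  moreover have "card ?new = (if v = u \<and> Q w \<or> v = w \<and> Q u then 1 else 0)"
  proof -
    have "?new = (if v = u \<and> Q w then {w} else if v = w \<and> Q u then {u} else {})"
      using assms(3) by (auto simp: doubleton_eq_iff)
    then show ?thesis
      by simp
  qed
  ultimately show ?thesis
    by (simp only: card_Un_disjoint)
qed

lemma deg_insert_edge:
  assumes "finite E" and "{u, w} \<notin> E" and "u \<noteq> w"
  shows "deg (insert {u, w} E) v = deg E v + (if v = u \<or> v = w then 1 else 0)"
  using card_neighbors_insert_edge[OF assms, of v "\<lambda>_. True"] by (simp add: deg_def)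

lemma deg_edge_neighbors:
  assumes "edge_neighbors u w E E'"
  shows "\<bar>real (deg E' v) - real (deg E v)\<bar> \<le> (if v = u \<or> v = w then 1 else 0)"
  by (rule edge_neighbors_abs_diff_le[OF assms, of "\<lambda>E. real (deg E v)"]) (simp add: deg_insert_edge)

text \<open>The statistic \<open>l(v) - \<lceil>(d(v) - 1) / 2\<rceil>\<close> of \<open>\<A>\<^bsub>\<epsilon>'\<^esub>\<close>, where \<open>P\<close> is the \<open>+1\<close> side of \<open>c\<^sub>1\<close>.
  Adding an edge at \<open>v\<close> raises \<open>l(v)\<close> and \<open>\<lceil>(d(v) - 1) / 2\<rceil>\<close> each by zero or one, so
  the statistic moves by at most one.\<close>
definition uncut_surplus :: "nat set set \<Rightarrow> nat set \<Rightarrow> nat \<Rightarrow> int" where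
  "uncut_surplus E P v = int (card {u. {u, v} \<in> E \<and> (u \<in> P \<longleftrightarrow> v \<in> P)}) - \<lceil>(real (deg E v) - 1) / 2\<rceil>"

lemma uncut_surplus_edge_neighbors:
  assumes "edge_neighbors u w E E'"
  shows "\<bar>uncut_surplus E' P v - uncut_surplus E P v\<bar> \<le> (if v = u \<or> v = w then 1 else 0)"
proof (rule edge_neighbors_abs_diff_le[OF assms])
  fix E :: "nat set set"
  assume E: "u \<noteq> w" "finite E" "{u, w} \<notin> E"
  show "\<bar>uncut_surplus (insert {u, w} E) P v - uncut_surplus E P v\<bar> \<le> (if v = u \<or> v = w then 1 else 0)"
  proof (cases "v = u \<or> v = w")
    case True
    let ?d = "(real (deg E v) - 1) / 2"
    have half: "(real (deg (insert {u, w} E) v) - 1) / 2 = ?d + 1 / 2"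
      using E True by (simp add: deg_insert_edge add_divide_distrib diff_divide_distrib)
    \<comment> \<open>naming the ceilings keeps the simplifier from normalising the reals inside them\<close>
    obtain c c' where c: "\<lceil>?d\<rceil> = c" "\<lceil>?d + 1 / 2\<rceil> = c'"
      by blast
    have "c \<le> c'" "c' \<le> c + 1"
      using ceiling_mono[of ?d "?d + 1 / 2"] ceiling_mono[of "?d + 1 / 2" "?d + 1"] by (simp_all flip: c)
    moreover define l where "l = card {x. {x, v} \<in> E \<and> (x \<in> P \<longleftrightarrow> v \<in> P)}"
    ultimately show ?thesis
      using True unfolding uncut_surplus_def card_neighbors_insert_edge[OF E(2,3,1)] half c l_def[symmetric]
      by (simp add: abs_le_iff)
  next
    case False
    then show ?thesis
      unfolding uncut_surplus_def card_neighbors_insert_edge[OF E(2,3,1)] deg_insert_edge[OF E(2,3,1)]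
      by simp
  qed
qed

lemma cut_val_induced_edge_neighbors:
  assumes "edge_neighbors u w E E'"
  shows "\<bar>real (cut_val {e\<in>E'. e \<subseteq> C} A) - real (cut_val {e\<in>E. e \<subseteq> C} A)\<bar> \<le> 1"
proof (rule edge_neighbors_abs_diff_le[OF assms])
  fix E :: "nat set set"
  assume E: "u \<noteq> w" "finite E" "{u, w} \<notin> E"
  let ?cut = "\<lambda>E. {e\<in>E. e \<subseteq> C \<and> card (e \<inter> A) = 1}"
  have cut_val_eq: "cut_val {e\<in>X. e \<subseteq> C} A = card (?cut X)" for X
    unfolding cut_val_def by (rule arg_cong[where f = card]) auto
  have "?cut (insert {u, w} E)
      = (if {u, w} \<subseteq> C \<and> card ({u, w} \<inter> A) = 1 then insert {u, w} (?cut E) else ?cut E)"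
    by auto
  then have "card (?cut (insert {u, w} E)) \<le> card (?cut E) + 1" "card (?cut E) \<le> card (?cut (insert {u, w} E))"
    using E by (simp_all add: card_insert_le)
  then show "\<bar>real (cut_val {e\<in>insert {u, w} E. e \<subseteq> C} A) - real (cut_val {e\<in>E. e \<subseteq> C} A)\<bar> \<le> 1"
    unfolding cut_val_eq by simp
qed

section \<open>The components of the mechanism\<close>

lemma pmf_exp_mech_cut:
  assumes "finite C"
  shows "pmf (exp_mech_cut eps C H) A = (if A \<subseteq> C
      then exp (eps * real (cut_val H A) / 6) / (\<Sum>B\<in>Pow C. exp (eps * real (cut_val H B) / 6))
      else 0)"
  unfolding exp_mech_cut_def
proof (rule pmf_embed_pmf)
  let ?Z = "\<Sum>B\<in>Pow C. exp (eps * real (cut_val H B) / 6)"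
  have "0 < ?Z"
    using assms by (intro sum_pos) auto
  then show "0 \<le> (if B \<subseteq> C then exp (eps * real (cut_val H B) / 6) / ?Z else 0)" for B
    by simp
  have "(\<integral>\<^sup>+B. ennreal (if B \<subseteq> C then exp (eps * real (cut_val H B) / 6) / ?Z else 0) \<partial>count_space UNIV)
      = ennreal (\<Sum>B\<in>Pow C. exp (eps * real (cut_val H B) / 6) / ?Z)"
    using assms \<open>0 < ?Z\<close> by (subst nn_integral_count_space'[of "Pow C"]) (auto intro!: sum_ennreal)
  also have "\<dots> = 1"
    using \<open>0 < ?Z\<close> by (simp add: sum_divide_distrib[symmetric])
  finally show "(\<integral>\<^sup>+B. ennreal (if B \<subseteq> C then exp (eps * real (cut_val H B) / 6) / ?Z else 0) \<partial>count_space UNIV) = 1" .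
qed


lemma exp_mech_cut_pmf_le:
  assumes "finite C" and "eps > 0"
    and sensitivity: "\<And>B. \<bar>real (cut_val H B) - real (cut_val H' B)\<bar> \<le> 1"
  shows "pmf (exp_mech_cut eps C H) A \<le> exp (eps / 3) * pmf (exp_mech_cut eps C H') A"
proof (cases "A \<subseteq> C")
  case True
  define weight where "weight G B = exp (eps * real (cut_val G B) / 6)" for G B
  have weight_le: "weight G B \<le> exp (eps / 6) * weight G' B"
    if "\<bar>real (cut_val G B) - real (cut_val G' B)\<bar> \<le> 1" for G G' B
  proof -
    have "eps * real (cut_val G B) \<le> eps * (1 + real (cut_val G' B))"
      using that assms(2) by (intro mult_left_mono) auto
    then show ?thesis
      by (simp add: weight_def algebra_simps add_divide_distrib flip: exp_add)
  qed
  let ?Z = "\<lambda>G. \<Sum>B\<in>Pow C. weight G B"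
  have Z_pos: "0 < ?Z G" for G
    using assms(1) by (intro sum_pos) (auto simp: weight_def)
  have "?Z H' \<le> exp (eps / 6) * ?Z H"
    unfolding sum_distrib_left using sensitivity
    by (intro sum_mono weight_le) (simp add: abs_minus_commute)
  then have "?Z H' / exp (eps / 6) \<le> ?Z H"
    by (simp add: pos_divide_le_eq mult.commute)
  then have "weight H A / ?Z H \<le> exp (eps / 6) * weight H' A / (?Z H' / exp (eps / 6))"
    using Z_pos weight_le[OF sensitivity] by (intro frac_le) (auto simp: weight_def)
  also have "\<dots> = exp (eps / 3) * (weight H' A / ?Z H')"
    by (simp add: field_simps flip: exp_add)
  finally show ?thesis
    using True assms(1) by (simp add: pmf_exp_mech_cut weight_def)
qed (simp add: pmf_exp_mech_cut assms(1))

lemma emeasure_S1_dist_le: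
  assumes "edge_neighbors u w E E'" and "finite C" and "eps > 0"
  shows "emeasure (S1_dist eps n E C) T \<le> ennreal (exp (eps / 3)) * emeasure (S1_dist eps n E' C) T"
  unfolding S1_dist_def emeasure_bind_pmf
  using cut_val_induced_edge_neighbors[OF assms(1)]
  by (intro nn_integral_pmf_le exp_mech_cut_pmf_le assms(2,3)) (simp_all add: abs_minus_commute)

lemma emeasure_alg_A_le:
  assumes "edge_neighbors u w E E'" and "u < n" and "w < n" and "eps' > 0"
  shows "emeasure (alg_A eps' n E) T \<le> ennreal (exp eps') * emeasure (alg_A eps' n E') T"
proof -
  let ?noise = "Pi_pmf {0..<n} 0 (\<lambda>_. dlap (eps' / 2))"
  have "emeasure (map_pmf (\<lambda>\<zeta>. f (\<lambda>v. uncut_surplus E P v + \<zeta> v)) ?noise) T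
      \<le> ennreal (exp eps') * emeasure (map_pmf (\<lambda>\<zeta>. f (\<lambda>v. uncut_surplus E' P v + \<zeta> v)) ?noise) T"
    for f :: "(nat \<Rightarrow> int) \<Rightarrow> nat set" and P
  proof -
    let ?\<delta> = "\<lambda>v. \<bar>real_of_int (uncut_surplus E P v - uncut_surplus E' P v)\<bar>"
    have bound: "?\<delta> v \<le> (if v = u \<or> v = w then 1 else 0)" for v
      using uncut_surplus_edge_neighbors[OF assms(1), of P v]
      unfolding of_int_diff[symmetric] of_int_abs[symmetric] by (cases "v = u \<or> v = w") (auto simp: abs_minus_commute)
    have local: "uncut_surplus E P v = uncut_surplus E' P v" if "v \<notin> {u, w}" for v
      using bound[of v] that by simp
    have "(\<Sum>v\<in>{0..<n}. ?\<delta> v) = (\<Sum>v\<in>{u, w}. ?\<delta> v)"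
      using assms(2,3) local by (intro sum.mono_neutral_right) auto
    also have "\<dots> \<le> (\<Sum>v\<in>{u, w}. 1)"
      using bound[of u] bound[of w] by (intro sum_mono) auto
    also have "\<dots> \<le> 2"
      by (cases "u = w") simp_all
    finally have "eps' / 2 * (\<Sum>v\<in>{0..<n}. ?\<delta> v) \<le> eps'"
      using mult_left_mono[of _ 2 "eps' / 2"] assms(4) by simp
    then have privacy_loss: "ennreal (exp (eps' / 2 * (\<Sum>v\<in>{0..<n}. ?\<delta> v))) \<le> ennreal (exp eps')"
      by (intro ennreal_leI) simp
    have "emeasure (map_pmf (\<lambda>\<zeta>. f (\<lambda>v. uncut_surplus E P v + \<zeta> v)) ?noise) T
        \<le> ennreal (exp (eps' / 2 * (\<Sum>v\<in>{0..<n}. ?\<delta> v)))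
          * emeasure (map_pmf (\<lambda>\<zeta>. f (\<lambda>v. uncut_surplus E' P v + \<zeta> v)) ?noise) T"
      using assms(2-4) local by (intro emeasure_dlap_noise_le) auto
    also have "\<dots> \<le> ennreal (exp eps') * emeasure (map_pmf (\<lambda>\<zeta>. f (\<lambda>v. uncut_surplus E' P v + \<zeta> v)) ?noise) T"
      using privacy_loss by (rule mult_right_mono) simp
    finally show ?thesis .
  qed
  note noise_le = this[of "\<lambda>s. {v\<in>{0..<n}. if s v \<le> 0 then v \<in> P1 else v \<in> P2}" P1 for P1 P2]
  show ?thesis
    unfolding alg_A_def Let_def uncut_surplus_def[symmetric]
    by (intro emeasure_bind_pmf_mono noise_le[unfolded map_pmf_def])
qed

definition high_degree :: "real \<Rightarrow> nat \<Rightarrow> nat set set \<Rightarrow> (nat \<Rightarrow> real) \<Rightarrow> nat set" where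
  "high_degree eps n E x = {v\<in>{0..<n}. real (deg E v) + x v > 10000 / eps\<^sup>2}"

lemma measurable_high_degree:
  "high_degree eps n E \<in> PiM {0..<n} (\<lambda>_. laplace b) \<rightarrow>\<^sub>M count_space (Pow {0..<n})"
proof -
  let ?M = "PiM {0..<n} (\<lambda>_. laplace b)"
  have "high_degree eps n E -` {A} \<inter> space ?M \<in> sets ?M" if "A \<subseteq> {0..<n}" for A
  proof -
    have Collect_eq: "{v\<in>{0..<n}. P v} = A \<longleftrightarrow> (\<forall>v\<in>{0..<n}. P v = (v \<in> A))" for P
      using that by blast
    have "high_degree eps n E -` {A} \<inter> space ?M = {x \<in> space ?M. high_degree eps n E x = A}"
      by blast
    also have "\<dots> = {x \<in> space ?M. \<forall>v\<in>{0..<n}. (10000 / eps\<^sup>2 < real (deg E v) + x v) = (v \<in> A)}"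
      unfolding high_degree_def by (simp only: Collect_eq)
    also have "\<dots> \<in> sets ?M"
      by measurable
    finally show ?thesis .
  qed
  then show ?thesis
    by (auto simp: measurable_count_space_eq2 high_degree_def)
qed

lemma borel_measurable_high_degree:
  "(\<lambda>x. g (high_degree eps n E x)) \<in> borel_measurable (PiM {0..<n} (\<lambda>_. laplace b))"
  using measurable_high_degree by (rule measurable_compose) simp

lemma nn_integral_high_degree_le:
  assumes "edge_neighbors u w E E'" and "u < n" and "w < n" and "eps > 0"
  shows "(\<integral>\<^sup>+x. g (high_degree eps n E x) \<partial>PiM {0..<n} (\<lambda>_. laplace (3 / eps)))
     \<le> ennreal (exp (2 * eps / 3)) * (\<integral>\<^sup>+x. g (high_degree eps n E' x) \<partial>PiM {0..<n} (\<lambda>_. laplace (3 / eps)))"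
proof -
  let ?M = "PiM {0..<n} (\<lambda>_. laplace (3 / eps))"
  define \<delta> where "\<delta> v = real (deg E v) - real (deg E' v)" for v
  have shift: "high_degree eps n E x = high_degree eps n E' (\<lambda>v. x v + \<delta> v)" for x
    by (simp add: high_degree_def \<delta>_def algebra_simps)
  have \<delta>_local: "\<delta> v = 0" if "v \<notin> {u, w}" for v
    using deg_edge_neighbors[OF assms(1), of v] that by (simp add: \<delta>_def)
  have "(\<Sum>v\<in>{u, w}. \<bar>\<delta> v\<bar>) \<le> (\<Sum>v\<in>{u, w}. 1)"
    using deg_edge_neighbors[OF assms(1), of u] deg_edge_neighbors[OF assms(1), of w]
    by (intro sum_mono) (auto simp: \<delta>_def abs_minus_commute)
  also have "\<dots> \<le> 2"
    by (cases "u = w") simp_all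
  finally have "(\<Sum>v\<in>{u, w}. \<bar>\<delta> v\<bar>) / (3 / eps) \<le> 2 * eps / 3"
    using mult_right_mono[of _ 2 "eps / 3"] assms(4) by simp
  then have privacy_loss: "ennreal (exp ((\<Sum>v\<in>{u, w}. \<bar>\<delta> v\<bar>) / (3 / eps))) \<le> ennreal (exp (2 * eps / 3))"
    by (intro ennreal_leI) simp
  have "(\<integral>\<^sup>+x. g (high_degree eps n E x) \<partial>?M) = (\<integral>\<^sup>+x. g (high_degree eps n E' (\<lambda>v. x v + \<delta> v)) \<partial>?M)"
    by (simp only: shift)
  also have "\<dots> \<le> ennreal (exp ((\<Sum>v\<in>{u, w}. \<bar>\<delta> v\<bar>) / (3 / eps))) * (\<integral>\<^sup>+x. g (high_degree eps n E' x) \<partial>?M)"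
    using assms \<delta>_local by (intro nn_integral_PiM_laplace_shift_le borel_measurable_high_degree) auto
  also have "\<dots> \<le> ennreal (exp (2 * eps / 3)) * (\<integral>\<^sup>+x. g (high_degree eps n E' x) \<partial>?M)"
    using privacy_loss by (rule mult_right_mono) simp
  finally show ?thesis .
qed

definition mech_given :: "real \<Rightarrow> nat \<Rightarrow> nat set set \<Rightarrow> nat set \<Rightarrow> nat set pmf" where
  "mech_given eps n E C =
     bind_pmf (bernoulli_pmf (1/2)) (\<lambda>b. if b then S1_dist eps n E C else alg_A (eps / 3) n E)"

lemma emeasure_mech_given_le:
  assumes "edge_neighbors u w E E'" and "u < n" and "w < n" and "finite C" and "eps > 0"
  shows "emeasure (mech_given eps n E C) T \<le> ennreal (exp (eps / 3)) * emeasure (mech_given eps n E' C) T"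
  unfolding mech_given_def
  using emeasure_S1_dist_le[OF assms(1,4,5)] emeasure_alg_A_le[OF assms(1-3), of "eps / 3"] assms(5)
  by (intro emeasure_bind_pmf_mono) simp

lemma emeasure_mech:
  "emeasure (mech eps n E) T
     = (\<integral>\<^sup>+x. emeasure (mech_given eps n E (high_degree eps n E x)) T \<partial>PiM {0..<n} (\<lambda>_. laplace (3 / eps)))"
proof -
  have "(\<lambda>x. measure_pmf (mech_given eps n E (high_degree eps n E x)))
      \<in> PiM {0..<n} (\<lambda>_. laplace (3 / eps)) \<rightarrow>\<^sub>M subprob_algebra (count_space UNIV)"
    using measurable_high_degree by (rule measurable_compose) (simp add: space_subprob_algebra subprob_space_measure_pmf)
  moreover have "space (PiM {0..<n} (\<lambda>_. laplace (3 / eps))) \<noteq> {}"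
    by (simp add: space_PiM PiE_eq_empty_iff)
  ultimately show ?thesis
    by (simp add: mech_def mech_given_def high_degree_def Let_def emeasure_bind[where N = "count_space UNIV"])
qed

theorem theorem5p6:
  fixes eps :: real
  assumes "eps > 0"
  shows "\<forall>n E E' T. graph_on n E \<longrightarrow> graph_on n E' \<longrightarrow> neighbor_graphs E E' \<longrightarrow>
           emeasure (mech eps n E) T \<le> ennreal (exp eps) * emeasure (mech eps n E') T"
proof (intro allI impI)
  fix n E E' T
  assume "graph_on n E" "graph_on n E'" "neighbor_graphs E E'"
  then obtain u w where uw: "u < n" "w < n" "edge_neighbors u w E E'"
    by (rule neighbor_graphs_edge_neighbors)
  let ?M = "PiM {0..<n} (\<lambda>_. laplace (3 / eps))"
  define G where "G C = emeasure (mech_given eps n E' C) T" for C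
  have "emeasure (mech eps n E) T \<le> (\<integral>\<^sup>+x. ennreal (exp (eps / 3)) * G (high_degree eps n E x) \<partial>?M)"
    unfolding emeasure_mech G_def
    by (intro nn_integral_mono emeasure_mech_given_le[OF uw(3,1,2) _ assms]) (simp add: high_degree_def)
  also have "\<dots> = ennreal (exp (eps / 3)) * (\<integral>\<^sup>+x. G (high_degree eps n E x) \<partial>?M)"
    by (rule nn_integral_cmult[OF borel_measurable_high_degree])
  also have "\<dots> \<le> ennreal (exp (eps / 3)) * (ennreal (exp (2 * eps / 3)) * (\<integral>\<^sup>+x. G (high_degree eps n E' x) \<partial>?M))"
    by (intro mult_left_mono nn_integral_high_degree_le[OF uw(3,1,2) assms]) simp
  also have "\<dots> = ennreal (exp eps) * emeasure (mech eps n E') T"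
    by (simp add: emeasure_mech G_def mult.assoc[symmetric] flip: ennreal_mult exp_add)
  finally show "emeasure (mech eps n E) T \<le> ennreal (exp eps) * emeasure (mech eps n E') T" .
qed

end
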